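(* Let $\sigma:\mathbb{Z}^2\times\mathbb{Z}^2\to U(1)$ be $\sigma((n,m),(n',m'))=\exp(-2\pi i(\xi_1 nm'+\xi_2 mn'))$ with $\xi_2=\theta/2=-\xi_1$. Then the map $\tilde\sigma:(\mathbb{Z}^2\rtimes_{\varphi_\epsilon}\mathbb{Z})\times(\mathbb{Z}^2\rtimes_{\varphi_\epsilon}\mathbb{Z})\to U(1)$, $$\tilde\sigma((n,m,k),(n',m',k')) := \sigma\big((n,m),(n',m')\varphi_\epsilon^k\big),$$ is a multiplier on the group $\mathbb{Z}^2\rtimes_{\varphi_\epsilon}\mathbb{Z}$.
   Context: Let $\mathbb{K}$ be a real quadratic field, $\theta\in\mathbb{K}\setminus\mathbb{Q}$ (regarded as a real number via a fixed real embedding), and let $\epsilon$ be a totally positive unit of $\mathbb{K}$ with $\epsilon(\mathbb{Z}+\mathbb{Z}\theta)=\mathbb{Z}+\mathbb{Z}\theta$. Write $\epsilon=a+b\theta$ and $\epsilon\theta=c+d\theta$ with $a,b,c,d\in\mathbb{Z}$ and set $\varphi_\epsilon=\begin{pmatrix}a&b\\c&d\end{pmatrix}$, which lies in $\mathrm{SL}_2(\mathbb{Z})$. The group $\mathbb{Z}^2\rtimes_{\varphi_\epsilon}\mathbb{Z}$ consists of triples $(n,m,k)$, with elements of $\mathbb{Z}^2$ written as row vectors, and product $((n,m),k)\cdot((n',m'),k')=((n,m)+(n',m')\varphi_\epsilon^k,\,k+k')$. A multiplier on a discrete group $\Gamma$ is a map $\sigma:\Gamma\times\Gamma\to U(1)$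 satisfying $\sigma(\gamma_1,\gamma_2)\sigma(\gamma_1\gamma_2,\gamma_3)=\sigma(\gamma_1,\gamma_2\gamma_3)\sigma(\gamma_2,\gamma_3)$ and $\sigma(\gamma,1)=\sigma(1,\gamma)=1$. *)

theory Defs
  imports "HOL-Analysis.Analysis" "HOL-Computational_Algebra.Polynomial"
begin

definition quad_irrational :: "real \<Rightarrow> bool" where
  "quad_irrational \<theta> \<longleftrightarrow> \<theta> \<notin> \<rat> \<and> (\<exists>p\<in>\<rat>. \<exists>q\<in>\<rat>. \<theta>^2 = p * \<theta> + q)"

definition qfield :: "real \<Rightarrow> real set" where
  "qfield \<theta> = {r + s * \<theta> | r s. r \<in> \<rat> \<and> s \<in> \<rat>}"

text \<open>Coefficients (p,q) with theta^2 = p theta + q; p is the trace of theta.\<close>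
definition quad_min :: "real \<Rightarrow> real \<times> real" where
  "quad_min \<theta> = (SOME (p, q). p \<in> \<rat> \<and> q \<in> \<rat> \<and> \<theta>^2 = p * \<theta> + q)"

definition qcoords :: "real \<Rightarrow> real \<Rightarrow> real \<times> real" where
  "qcoords \<theta> x = (THE (r, s). r \<in> \<rat> \<and> s \<in> \<rat> \<and> x = r + s * \<theta>)"

definition qconj :: "real \<Rightarrow> real \<Rightarrow> real" where
  "qconj \<theta> x = (case qcoords \<theta> x of (r, s) \<Rightarrow> r + s * (fst (quad_min \<theta>) - \<theta>))"

definition totally_positive_unit :: "real \<Rightarrow> real \<Rightarrow> bool" where
  "totally_positive_unit \<theta> \<epsilon> \<longleftrightarrow>
     \<epsilon> \<in> qfield \<theta> \<and> algebraic_int \<epsilon> \<and> algebraic_int (1 / \<epsilon>) \<and>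
     \<epsilon> > 0 \<and> qconj \<theta> \<epsilon> > 0"

definition zlattice :: "real \<Rightarrow> real set" where
  "zlattice \<theta> = {of_int n + of_int m * \<theta> | n m. True}"

type_synonym mat2 = "int \<times> int \<times> int \<times> int"  \<comment> \<open>(a,b,c,d) = [[a,b],[c,d]]\<close>

definition det2 :: "mat2 \<Rightarrow> int" where
  "det2 M = (case M of (a, b, c, d) \<Rightarrow> a * d - b * c)"

definition rmul :: "int \<times> int \<Rightarrow> mat2 \<Rightarrow> int \<times> int" where
  "rmul v M = (case v of (n, m) \<Rightarrow> case M of (a, b, c, d) \<Rightarrow> (n * a + m * c, n * b + m * d))"

definition sl2_inv :: "mat2 \<Rightarrow> mat2" where
  "sl2_inv M = (case M of (a, b, c, d) \<Rightarrow> (d, -b, -c, a))"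

text \<open>v * M^k for integer k (for det M = 1).\<close>
definition rmul_pow :: "int \<times> int \<Rightarrow> mat2 \<Rightarrow> int \<Rightarrow> int \<times> int" where
  "rmul_pow v M k = (if 0 \<le> k then ((\<lambda>w. rmul w M) ^^ nat k) v
                    else ((\<lambda>w. rmul w (sl2_inv M)) ^^ nat (- k)) v)"

definition sd_mult :: "mat2 \<Rightarrow> (int \<times> int) \<times> int \<Rightarrow> (int \<times> int) \<times> int \<Rightarrow> (int \<times> int) \<times> int" where
  "sd_mult M x y = (case x of (v, k) \<Rightarrow> case y of (v', k') \<Rightarrow> (v + rmul_pow v' M k, k + k'))"

definition sd_one :: "(int \<times> int) \<times> int" where
  "sd_one = ((0, 0), 0)"

definition multiplier :: "('g \<Rightarrow> 'g \<Rightarrow> 'g) \<Rightarrow> 'g \<Rightarrow> ('g \<Rightarrow> 'g \<Rightarrow> complex) \<Rightarrow> bool" where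
  "multiplier mul e s \<longleftrightarrow>
     (\<forall>x y. norm (s x y) = 1) \<and>
     (\<forall>x y z. s x y * s (mul x y) z = s x (mul y z) * s y z) \<and>
     (\<forall>x. s x e = 1 \<and> s e x = 1)"

definition sigma2 :: "real \<Rightarrow> real \<Rightarrow> int \<times> int \<Rightarrow> int \<times> int \<Rightarrow> complex" where
  "sigma2 \<xi>1 \<xi>2 v w = (case v of (n, m) \<Rightarrow> case w of (n', m') \<Rightarrow>
      exp (- 2 * of_real pi * \<i> * of_real (\<xi>1 * of_int (n * m') + \<xi>2 * of_int (m * n'))))"

definition sigma_tilde :: "real \<Rightarrow> real \<Rightarrow> mat2 \<Rightarrow> (int \<times> int) \<times> int \<Rightarrow> (int \<times> int) \<times> int \<Rightarrow> complex" where
  "sigma_tilde \<xi>1 \<xi>2 M x y = (case x of (v, k) \<Rightarrow> case y of (v', k') \<Rightarrow>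
      sigma2 \<xi>1 \<xi>2 v (rmul_pow v' M k))"

end

theory Submission
  imports Defs
begin

text \<open>
  The exponent of \<open>\<sigma>\<close> is \<open>-\<pi>i\<theta>\<close> times the standard symplectic form
  \<open>\<omega>((n,m),(n',m')) = m n' - n m'\<close> on \<open>\<int>\<^sup>2\<close>. It is bilinear and invariant under
  \<open>SL\<^sub>2(\<int>)\<close>, so \<open>\<omega>(v, v' \<phi>\<^sup>k)\<close> is an additive 2-cocycle on the semidirect product, and
  \<open>\<sigma>\<close> composed with the twist is \<open>cis\<close> of a real multiple of it. It remains to see that \<open>\<phi>\<^sub>\<epsilon> \<in> SL\<^sub>2(\<int>)\<close>:
  its determinant is the norm \<open>\<epsilon> \<epsilon>'\<close>, which is positive because \<open>\<epsilon>\<close> is totally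
  positive, and is \<open>\<plusminus>1\<close> because multiplication by \<open>\<epsilon>\<close> maps the lattice \<open>\<int> + \<int>\<theta>\<close>
  onto itself.
\<close>

definition sympl :: "int \<times> int \<Rightarrow> int \<times> int \<Rightarrow> int" where
  "sympl v w = (case v of (n, m) \<Rightarrow> case w of (n', m') \<Rightarrow> m * n' - n * m')"

lemma sympl_simp [simp]: "sympl (n, m) (n', m') = m * n' - n * m'"
  by (simp add: sympl_def)

lemma sympl_add_left: "sympl (v + v') w = sympl v w + sympl v' w"
  by (cases v; cases v'; cases w) (simp add: algebra_simps)

lemma sympl_add_right: "sympl v (w + w') = sympl v w + sympl v w'"
  by (cases v; cases w; cases w') (simp add: algebra_simps)

lemma sympl_zero_left [simp]: "sympl 0 w = 0"
  by (cases w) (simp add: zero_prod_def)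

lemma sympl_zero_right [simp]: "sympl v 0 = 0"
  by (cases v) (simp add: zero_prod_def)

lemma rmul_simp [simp]: "rmul (n, m) (a, b, c, d) = (n * a + m * c, n * b + m * d)"
  by (simp add: rmul_def)

lemma det2_simp [simp]: "det2 (a, b, c, d) = a * d - b * c"
  by (simp add: det2_def)

lemma rmul_add: "rmul (v + w) M = rmul v M + rmul w M"
  by (cases v; cases w; cases M rule: prod_cases4) (simp add: algebra_simps)

lemma rmul_zero [simp]: "rmul 0 M = 0"
  by (cases M rule: prod_cases4) (simp add: zero_prod_def)

lemma det2_sl2_inv [simp]: "det2 (sl2_inv M) = det2 M"
  by (cases M rule: prod_cases4) (simp add: sl2_inv_def)

lemma rmul_rmul_sl2_inv:
  assumes "det2 M = 1"
  shows "rmul (rmul w M) (sl2_inv M) = w"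
proof (cases w; cases M rule: prod_cases4)
  fix n m a b c d
  assume "w = (n, m)" and M: "M = (a, b, c, d)"
  moreover have "(n * a + m * c) * d + (n * b + m * d) * - c = n * (a * d - b * c)"
    and "(n * a + m * c) * - b + (n * b + m * d) * a = m * (a * d - b * c)"
    by (simp_all add: algebra_simps)
  ultimately show ?thesis using assms by (simp add: sl2_inv_def)
qed

lemma rmul_sl2_inv_rmul:
  assumes "det2 M = 1"
  shows "rmul (rmul w (sl2_inv M)) M = w"
proof -
  have "sl2_inv (sl2_inv M) = M"
    by (cases M rule: prod_cases4) (simp add: sl2_inv_def)
  then show ?thesis
    using rmul_rmul_sl2_inv[of "sl2_inv M" w] assms by simp
qed

lemma sympl_rmul:
  assumes "det2 M = 1"
  shows "sympl (rmul v M) (rmul w M) = sympl v w"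
proof (cases v; cases w; cases M rule: prod_cases4)
  fix n m n' m' a b c d
  assume "v = (n, m)" "w = (n', m')" "M = (a, b, c, d)"
  moreover have "(n * b + m * d) * (n' * a + m' * c) - (n * a + m * c) * (n' * b + m' * d)
      = (m * n' - n * m') * (a * d - b * c)"
    by (simp add: algebra_simps)
  ultimately show ?thesis using assms by simp
qed

lemma funpow_additive:
  fixes f :: "'a::monoid_add \<Rightarrow> 'a"
  assumes "\<And>x y. f (x + y) = f x + f y"
  shows "(f ^^ n) (x + y) = (f ^^ n) x + (f ^^ n) y"
  by (induction n) (simp_all add: assms)

lemma funpow_fixed_point: "f x = x \<Longrightarrow> (f ^^ n) x = x"
  by (induction n) simp_all

lemma rmul_pow_add: "rmul_pow (v + w) M k = rmul_pow v M k + rmul_pow w M k"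
  unfolding rmul_pow_def by (simp add: funpow_additive rmul_add)

lemma rmul_pow_zero [simp]: "rmul_pow 0 M k = 0"
  unfolding rmul_pow_def by (simp add: funpow_fixed_point)

lemma rmul_pow_0 [simp]: "rmul_pow v M 0 = v"
  by (simp add: rmul_pow_def)

lemma rmul_pow_succ:
  assumes "det2 M = 1"
  shows "rmul_pow v M (k + 1) = rmul (rmul_pow v M k) M"
proof (cases "0 \<le> k")
  case True
  then have "nat (k + 1) = Suc (nat k)" by simp
  with True show ?thesis by (simp add: rmul_pow_def)
next
  case False
  then consider "k = -1" | "nat (- k) = Suc (nat (- (k + 1)))" "k + 1 < 0"
    by linarith
  then show ?thesis
    by cases (use False rmul_sl2_inv_rmul[OF assms] in \<open>simp_all add: rmul_pow_def\<close>)
qed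

lemma rmul_pow_pred:
  assumes "det2 M = 1"
  shows "rmul_pow v M (k - 1) = rmul (rmul_pow v M k) (sl2_inv M)"
  using rmul_pow_succ[OF assms, of v "k - 1"] rmul_rmul_sl2_inv[OF assms] by simp

lemma rmul_pow_rmul_pow:
  assumes "det2 M = 1"
  shows "rmul_pow (rmul_pow v M k') M k = rmul_pow v M (k + k')"
proof (induction k rule: int_induct[where k = 0])
  case (step1 i)
  have "i + 1 + k' = (i + k') + 1" by simp
  then show ?case by (simp only: rmul_pow_succ[OF assms] step1(2))
next
  case (step2 i)
  have "i - 1 + k' = (i + k') - 1" by simp
  then show ?case by (simp only: rmul_pow_pred[OF assms] step2(2))
qed simp

lemma sympl_rmul_pow:
  assumes "det2 M = 1"
  shows "sympl (rmul_pow v M k) (rmul_pow w M k) = sympl v w"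
proof (induction k rule: int_induct[where k = 0])
  case (step1 i)
  then show ?case by (simp add: rmul_pow_succ[OF assms] sympl_rmul[OF assms])
next
  case (step2 i)
  then show ?case
    by (simp add: rmul_pow_pred[OF assms] sympl_rmul[of "sl2_inv M"] assms)
qed simp

lemma multiplier_cisI:
  fixes f :: "'g \<Rightarrow> 'g \<Rightarrow> real"
  assumes "\<And>x y z. f x y + f (mul x y) z = f x (mul y z) + f y z"
    and "\<And>x. f x e = 0" and "\<And>x. f e x = 0"
  shows "multiplier mul e (\<lambda>x y. cis (f x y))"
  unfolding multiplier_def by (simp add: assms(2,3) cis_mult assms(1)[symmetric])

definition sd_sympl :: "mat2 \<Rightarrow> (int \<times> int) \<times> int \<Rightarrow> (int \<times> int) \<times> int \<Rightarrow> int" where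
  "sd_sympl M x y = (case x of (v, k) \<Rightarrow> case y of (v', k') \<Rightarrow> sympl v (rmul_pow v' M k))"

lemma sd_sympl_cocycle:
  assumes "det2 M = 1"
  shows "sd_sympl M x y + sd_sympl M (sd_mult M x y) z
       = sd_sympl M x (sd_mult M y z) + sd_sympl M y z"
proof -
  obtain v k v' k' v'' k'' where xyz: "x = (v, k)" "y = (v', k')" "z = (v'', k'')"
    by (metis prod.collapse)
  have lhs: "sd_sympl M x y + sd_sympl M (sd_mult M x y) z
      = sympl v (rmul_pow v' M k) + sympl (v + rmul_pow v' M k) (rmul_pow v'' M (k + k'))"
    by (simp add: xyz sd_sympl_def sd_mult_def)
  have rhs: "sd_sympl M x (sd_mult M y z) + sd_sympl M y z
      = sympl v (rmul_pow (v' + rmul_pow v'' M k') M k) + sympl v' (rmul_pow v'' M k')"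
    by (simp add: xyz sd_sympl_def sd_mult_def)
  have "rmul_pow (v' + rmul_pow v'' M k') M k = rmul_pow v' M k + rmul_pow v'' M (k + k')"
    by (simp only: rmul_pow_add rmul_pow_rmul_pow[OF assms])
  moreover have "sympl (rmul_pow v' M k) (rmul_pow v'' M (k + k')) = sympl v' (rmul_pow v'' M k')"
    using sympl_rmul_pow[OF assms, of v' k "rmul_pow v'' M k'"]
    by (simp only: rmul_pow_rmul_pow[OF assms])
  ultimately show ?thesis
    by (simp add: lhs rhs sympl_add_left sympl_add_right)
qed

lemma sd_sympl_one [simp]: "sd_sympl M x sd_one = 0" "sd_sympl M sd_one x = 0"
proof -
  obtain v k where x: "x = (v, k)"
    by (metis prod.collapse)
  have one: "sd_one = (0, 0)"
    by (simp add: sd_one_def zero_prod_def)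
  show "sd_sympl M x sd_one = 0" "sd_sympl M sd_one x = 0"
    by (simp_all add: x one sd_sympl_def)
qed

lemma sigma_tilde_eq_cis:
  "sigma_tilde (- t) t M x y = cis (- 2 * pi * t * of_int (sd_sympl M x y))"
proof -
  obtain n m k n' m' k' where xy: "x = ((n, m), k)" "y = ((n', m'), k')"
    by (metis prod.collapse)
  obtain p q where pq: "rmul_pow (n', m') M k = (p, q)"
    by fastforce
  have "sigma_tilde (- t) t M x y
      = exp (- 2 * of_real pi * \<i> * of_real (- t * of_int (n * q) + t * of_int (m * p)))"
    by (simp add: xy pq sigma_tilde_def sigma2_def)
  also have "\<dots> = exp (\<i> * of_real (- 2 * pi * t * of_int (m * p - n * q)))"
    by (rule arg_cong[where f = exp]) (simp add: algebra_simps)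
  finally show ?thesis
    by (simp add: xy pq sd_sympl_def cis_conv_exp)
qed

theorem multiplier_sigma_tilde:
  assumes "det2 M = 1"
  shows "multiplier (sd_mult M) sd_one (sigma_tilde (- t) t M)"
proof -
  let ?f = "\<lambda>x y. - 2 * pi * t * of_int (sd_sympl M x y)"
  have "multiplier (sd_mult M) sd_one (\<lambda>x y. cis (?f x y))"
  proof (rule multiplier_cisI)
    fix x y z
    show "?f x y + ?f (sd_mult M x y) z = ?f x (sd_mult M y z) + ?f y z"
      using arg_cong[OF sd_sympl_cocycle[OF assms, of x y z], of "\<lambda>s. - 2 * pi * t * of_int s"]
      by (simp add: algebra_simps)
  qed simp_all
  moreover have "sigma_tilde (- t) t M = (\<lambda>x y. cis (?f x y))"
    by (intro ext) (rule sigma_tilde_eq_cis)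
  ultimately show ?thesis
    by simp
qed

lemma irrational_coords_unique:
  fixes \<theta> :: real
  assumes "\<theta> \<notin> \<rat>" "x + y * \<theta> = x' + y' * \<theta>"
    and "x \<in> \<rat>" "y \<in> \<rat>" "x' \<in> \<rat>" "y' \<in> \<rat>"
  shows "x = x' \<and> y = y'"
proof (cases "y = y'")
  case False
  then have "\<theta> = (x - x') / (y' - y)"
    using assms(2) by (simp add: field_simps)
  with assms show ?thesis by simp
qed (use assms in simp)

lemma irrational_int_coords_unique:
  fixes \<theta> :: real
  assumes "\<theta> \<notin> \<rat>" "of_int x + of_int y * \<theta> = of_int x' + of_int y' * \<theta>"
  shows "x = x' \<and> y = y'"
  using irrational_coords_unique[OF assms] by simp

lemma qcoords_eq:
  assumes "\<theta> \<notin> \<rat>" "r \<in> \<rat>" "s \<in> \<rat>"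
  shows "qcoords \<theta> (r + s * \<theta>) = (r, s)"
  unfolding qcoords_def
proof (rule the_equality)
  fix z
  assume "case z of (r', s') \<Rightarrow> r' \<in> \<rat> \<and> s' \<in> \<rat> \<and> r + s * \<theta> = r' + s' * \<theta>"
  moreover obtain r' s' where z: "z = (r', s')"
    by fastforce
  ultimately have "r + s * \<theta> = r' + s' * \<theta>" "r' \<in> \<rat>" "s' \<in> \<rat>"
    by simp_all
  with irrational_coords_unique[OF assms(1)] assms(2,3) show "z = (r, s)"
    unfolding z by metis
qed (use assms in simp)

lemma quad_min_eq:
  assumes "quad_irrational \<theta>"
  obtains P Q where "quad_min \<theta> = (P, Q)" "P \<in> \<rat>" "Q \<in> \<rat>" "\<theta>^2 = P * \<theta> + Q"
proof -
  have "\<exists>z. (\<lambda>(P, Q). P \<in> \<rat> \<and> Q \<in> \<rat> \<and> \<theta>^2 = P * \<theta> + Q) z"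
    using assms unfolding quad_irrational_def by auto
  from someI_ex[OF this] show ?thesis
    using that unfolding quad_min_def by (auto split: prod.splits)
qed

lemma lattice_mult_coords:
  fixes \<theta> \<epsilon> :: real
  assumes "\<epsilon> = of_int a + of_int b * \<theta>" "\<epsilon> * \<theta> = of_int c + of_int d * \<theta>"
  shows "\<epsilon> * (of_int x + of_int y * \<theta>) = of_int (x * a + y * c) + of_int (x * b + y * d) * \<theta>"
proof -
  have "\<epsilon> * (of_int x + of_int y * \<theta>) = of_int x * \<epsilon> + of_int y * (\<epsilon> * \<theta>)"
    by (simp add: algebra_simps)
  also have "\<dots> = of_int (x * a + y * c) + of_int (x * b + y * d) * \<theta>"
    using assms by (simp add: algebra_simps)
  finally show ?thesis .
qed

text \<open>The preimages of \<open>1\<close> and \<open>\<theta>\<close> form an integer matrix inverse to \<open>\<phi>\<^sub>\<epsilon>\<close>.\<close>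

lemma det_unit_if_lattice_preserved:
  fixes \<theta> \<epsilon> :: real
  assumes irr: "\<theta> \<notin> \<rat>"
    and onto: "(\<lambda>x. \<epsilon> * x) ` zlattice \<theta> = zlattice \<theta>"
    and a_b: "\<epsilon> = of_int a + of_int b * \<theta>" and c_d: "\<epsilon> * \<theta> = of_int c + of_int d * \<theta>"
  shows "\<bar>a * d - b * c\<bar> = 1"
proof -
  have preimage: "\<exists>x y. x * a + y * c = u \<and> x * b + y * d = w" for u w
  proof -
    have "of_int u + of_int w * \<theta> \<in> zlattice \<theta>"
      unfolding zlattice_def by blast
    then have "of_int u + of_int w * \<theta> \<in> (\<lambda>x. \<epsilon> * x) ` zlattice \<theta>"
      using onto by simp
    then obtain l where "l \<in> zlattice \<theta>" "\<epsilon> * l = of_int u + of_int w * \<theta>"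
      by (metis imageE)
    then obtain x y where "\<epsilon> * (of_int x + of_int y * \<theta>) = of_int u + of_int w * \<theta>"
      unfolding zlattice_def by blast
    then have "of_int (x * a + y * c) + of_int (x * b + y * d) * \<theta> = of_int u + of_int w * \<theta>"
      by (simp only: lattice_mult_coords[OF a_b c_d])
    then have "x * a + y * c = u \<and> x * b + y * d = w"
      by (rule irrational_int_coords_unique[OF irr])
    then show ?thesis
      by blast
  qed
  obtain p q where "p * a + q * c = 1" "p * b + q * d = 0"
    using preimage by blast
  moreover obtain r s where "r * a + s * c = 0" "r * b + s * d = 1"
    using preimage by blast
  moreover have "(p * s - q * r) * (a * d - b * c)
      = (p * a + q * c) * (r * b + s * d) - (p * b + q * d) * (r * a + s * c)"
    by (simp add: algebra_simps)
  ultimately have "(p * s - q * r) * (a * d - b * c) = 1"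
    by simp
  then have "a * d - b * c = 1 \<or> a * d - b * c = -1"
    using zmult_eq_1_iff by blast
  then show ?thesis
    by auto
qed

lemma mult_qconj_eq_det:
  fixes \<theta> \<epsilon> :: real
  assumes "quad_irrational \<theta>"
    and a_b: "\<epsilon> = of_int a + of_int b * \<theta>" and c_d: "\<epsilon> * \<theta> = of_int c + of_int d * \<theta>"
  shows "\<epsilon> * qconj \<theta> \<epsilon> = of_int (a * d - b * c)"
proof -
  have irr: "\<theta> \<notin> \<rat>"
    using assms(1) by (simp add: quad_irrational_def)
  obtain P Q where PQ: "quad_min \<theta> = (P, Q)" "P \<in> \<rat>" "Q \<in> \<rat>" "\<theta>^2 = P * \<theta> + Q"
    using quad_min_eq[OF assms(1)] by blast
  have "of_int c + of_int d * \<theta> = of_int a * \<theta> + of_int b * \<theta>^2"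
    using c_d unfolding a_b by (simp add: power2_eq_square algebra_simps)
  also have "\<dots> = of_int b * Q + (of_int a + of_int b * P) * \<theta>"
    unfolding PQ(4) by (simp add: algebra_simps)
  finally have "of_int c = of_int b * Q \<and> of_int d = of_int a + of_int b * P"
    by (rule irrational_coords_unique[OF irr]) (simp_all add: PQ(2,3))
  then have c: "of_int c = of_int b * Q" and d: "of_int d = of_int a + of_int b * P"
    by simp_all
  have conj: "qconj \<theta> \<epsilon> = of_int a + of_int b * (P - \<theta>)"
    unfolding qconj_def a_b by (simp add: qcoords_eq[OF irr] PQ(1))
  have "\<epsilon> * qconj \<theta> \<epsilon> = (of_int a + of_int b * \<theta>) * (of_int a + of_int b * (P - \<theta>))"
    unfolding conj by (simp only: a_b)
  also have "\<dots> = of_int a * of_int a + of_int a * of_int b * P + of_int b * of_int b * (P * \<theta> - \<theta>^2)"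
    by (simp add: power2_eq_square algebra_simps)
  also have "\<dots> = of_int a * of_int a + of_int a * of_int b * P - of_int b * of_int b * Q"
    unfolding PQ(4) by simp
  also have "\<dots> = of_int (a * d - b * c)"
    unfolding of_int_diff of_int_mult c d by (simp add: algebra_simps)
  finally show ?thesis .
qed

theorem lemma4p3:
  fixes \<theta> \<epsilon> :: real and a b c d :: int
  assumes "quad_irrational \<theta>"
    and "totally_positive_unit \<theta> \<epsilon>"
    and "(\<lambda>x. \<epsilon> * x) ` zlattice \<theta> = zlattice \<theta>"
    and "\<epsilon> = of_int a + of_int b * \<theta>"
    and "\<epsilon> * \<theta> = of_int c + of_int d * \<theta>"
  shows "multiplier (sd_mult (a, b, c, d)) sd_one
           (sigma_tilde (- \<theta> / 2) (\<theta> / 2) (a, b, c, d))"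
proof -
  have "\<theta> \<notin> \<rat>"
    using assms(1) by (simp add: quad_irrational_def)
  then have "\<bar>a * d - b * c\<bar> = 1"
    using det_unit_if_lattice_preserved assms(3-5) by blast
  moreover have "0 < \<epsilon> * qconj \<theta> \<epsilon>"
    using assms(2) by (simp add: totally_positive_unit_def)
  then have "0 < a * d - b * c"
    unfolding mult_qconj_eq_det[OF assms(1,4,5)] by (simp only: of_int_0_less_iff)
  ultimately have "det2 (a, b, c, d) = 1"
    by simp
  from multiplier_sigma_tilde[OF this, of "\<theta> / 2"] show ?thesis
    by simp
qed

end
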